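(* Let $A\in\mathbb{R}^{n\times n}$, $B\in\mathbb{R}^{n\times m}$, $C\in\mathbb{R}^{p\times n}$, $E\in\mathbb{R}^{n\times p}$, let $\Theta\subset\mathbb{R}^p$ be a convex compact set, and let $w:[0,\infty)\to\mathbb{R}^m$ be locally integrable. Let $x:[0,\infty)\to\mathbb{R}^n$, $z:[0,\infty)\to\mathbb{R}^p$ be locally absolutely continuous functions satisfying, for almost all $t\ge 0$, $$\dot{x}=Ax+Bw+Ez,\quad y=Cx,\quad \dot z=P_{N_\Theta(z-y)}(\dot y),$$ and $z(t)\in y(t)+\Theta$ for all $t\ge0$. Let $F:=A+EC$ and let $\xi(t):=e^{tF}x(0)+\int_0^t e^{(t-s)F}Bw(s)\,ds$. Then for every $t\ge0$, $$x(t)\in\xi(t)+\Xi(t),$$ where $\Xi(t)\subset\mathbb{R}^n$ is the convex compact set whose support function is $$\sigma_{\Xi(t)}(u)=\int_0^t\sigma_\Theta(E^{T}e^{sF^{T}}u)\,ds,\qquad u\in\mathbb{R}^n.$$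
   Context: For a closed convex set $S\subset\mathbb{R}^r$ and $u\in\mathbb{R}^r$, the inward normal cone is $N_S(u):=\{s\in\mathbb{R}^r:\ \inf_{v\in S}s^{T}(v-u)\ge0\}$, and $P_S(u):=\operatorname{argmin}_{v\in S}|u-v|$ is the metric (Euclidean) projection onto $S$. The support function of a convex compact set $S\subset\mathbb{R}^r$ is $\sigma_S(u):=\max_{v\in S}u^{T}v$; convex compact sets are in bijection with their support functions. $|\cdot|$ is the Euclidean norm. The sum $\xi(t)+\Xi(t)$ is the translate of $\Xi(t)$ by $\xi(t)$. *)

theory Defs
  imports "HOL-Analysis.Analysis"
begin

primrec matpow :: "real^'n^'n \<Rightarrow> nat \<Rightarrow> real^'n^'n" where
  "matpow M 0 = mat 1"
| "matpow M (Suc k) = M ** matpow M k"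

definition mat_exp :: "real^'n^'n \<Rightarrow> real^'n^'n" where
  "mat_exp M = (\<Sum>k. (1 / fact k) *\<^sub>R matpow M k)"

definition abs_continuous_on :: "real \<Rightarrow> real \<Rightarrow> (real \<Rightarrow> 'a::real_normed_vector) \<Rightarrow> bool" where
  "abs_continuous_on lo hi f \<longleftrightarrow>
     (\<forall>\<epsilon>>0. \<exists>\<delta>>0. \<forall>(k::nat) (a::nat \<Rightarrow> real) b.
        (\<forall>i<k. lo \<le> a i \<and> a i \<le> b i \<and> b i \<le> hi) \<and>
        (\<forall>i<k. \<forall>j<k. i \<noteq> j \<longrightarrow> b i \<le> a j \<or> b j \<le> a i) \<and>
        (\<Sum>i<k. b i - a i) < \<delta>
        \<longrightarrow> (\<Sum>i<k. norm (f (b i) - f (a i))) < \<epsilon>)"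

definition loc_abs_continuous :: "(real \<Rightarrow> 'a::real_normed_vector) \<Rightarrow> bool" where
  "loc_abs_continuous f \<longleftrightarrow> (\<forall>T\<ge>0. abs_continuous_on 0 T f)"

text \<open>Inward normal cone N_S(u) = {s. inf_{v in S} s.(v-u) >= 0}.\<close>
definition normal_cone :: "'a::real_inner set \<Rightarrow> 'a \<Rightarrow> 'a set" where
  "normal_cone S u = {s. \<forall>v\<in>S. inner s (v - u) \<ge> 0}"

definition support_fun :: "'a::real_inner set \<Rightarrow> 'a \<Rightarrow> real" where
  "support_fun S u = Sup ((\<lambda>v. inner u v) ` S)"

end

theory Submission
  imports Defs
begin

text \<open>
  Put \<open>F = A + E C\<close> and \<open>v = z - C x\<close>. The state equation becomes
  \<open>x' = F x + B w + E v\<close>, and the constraint \<open>z(t) \<in> C x(t) + \<Theta>\<close> says exactly that \<open>v\<close>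
  takes its values in \<open>\<Theta>\<close>. Variation of constants, which for a merely absolutely continuous
  \<open>x\<close> rests on the fundamental theorem of calculus for absolutely continuous functions, gives
  \<open>x(t) = \<xi>(t) + \<integral>\<^sub>0\<^sup>t e\<^bsup>(t-s)F\<^esup> E v(s) ds\<close>. Pairing the last integral with
  any \<open>u\<close> and bounding pointwise by the support function of \<open>\<Theta>\<close> shows that it lies in
  \<open>\<Xi> = {y. \<forall>u. \<langle>u, y\<rangle> \<le> H u}\<close>, where \<open>H u = \<integral>\<^sub>0\<^sup>t \<sigma>\<^sub>\<Theta>(E\<^sup>T e\<^bsup>sF\<^sup>T\<^esup> u) ds\<close>.
  As an integral of support functions, \<open>H\<close> is sublinear, and a sublinear function on a
  Euclidean space is the support function of this \<open>\<Xi>\<close> (separate its epigraph from a point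
  below it).
\<close>

section \<open>Square matrices as a real Banach algebra\<close>

text \<open>
  \<open>real^'n^'n\<close> already carries the componentwise product, so the matrix algebra is set up on a
  copy of it. With the operator norm it is a Banach algebra, and \<open>mat_exp\<close> becomes the
  library's \<open>exp\<close> there (\<open>mat_exp_eq_exp\<close>).
\<close>

typedef ('n::finite) sqmat = "UNIV :: (real^'n^'n) set"
  morphisms to_matrix of_matrix by simp

setup_lifting type_definition_sqmat

lemma matrix_add_rdistrib: "((A::real^'n^'m) + B) ** C = A ** C + B ** C"
  by (vector matrix_matrix_mult_def sum.distrib distrib_right)

instantiation sqmat :: (finite) real_algebra_1
begin

lift_definition zero_sqmat :: "'a sqmat" is 0 .
lift_definition one_sqmat :: "'a sqmat" is "mat 1" .
lift_definition plus_sqmat :: "'a sqmat \<Rightarrow> 'a sqmat \<Rightarrow> 'a sqmat" is "(+)" .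
lift_definition minus_sqmat :: "'a sqmat \<Rightarrow> 'a sqmat \<Rightarrow> 'a sqmat" is "(-)" .
lift_definition uminus_sqmat :: "'a sqmat \<Rightarrow> 'a sqmat" is uminus .
lift_definition times_sqmat :: "'a sqmat \<Rightarrow> 'a sqmat \<Rightarrow> 'a sqmat" is "(**)" .
lift_definition scaleR_sqmat :: "real \<Rightarrow> 'a sqmat \<Rightarrow> 'a sqmat" is scaleR .

instance
proof
  fix M N P :: "'a sqmat" and r s :: real
  show "M + N + P = M + (N + P)" by transfer (rule add.assoc)
  show "M + N = N + M" by transfer (rule add.commute)
  show "0 + M = M" by transfer simp
  show "- M + M = 0" by transfer simp
  show "M - N = M + - N" by transfer simp
  show "r *\<^sub>R (M + N) = r *\<^sub>R M + r *\<^sub>R N" by transfer (rule scaleR_right_distrib)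
  show "(r + s) *\<^sub>R M = r *\<^sub>R M + s *\<^sub>R M" by transfer (rule scaleR_left_distrib)
  show "r *\<^sub>R s *\<^sub>R M = (r * s) *\<^sub>R M" by transfer simp
  show "1 *\<^sub>R M = M" by transfer simp
  show "M * N * P = M * (N * P)" by transfer (rule matrix_mul_assoc[symmetric])
  show "1 * M = M" by transfer simp
  show "M * 1 = M" by transfer simp
  show "(M + N) * P = M * P + N * P" by transfer (rule matrix_add_rdistrib)
  show "M * (N + P) = M * N + M * P" by transfer (rule matrix_add_ldistrib)
  show "r *\<^sub>R M * N = r *\<^sub>R (M * N)" by transfer (rule scalar_matrix_assoc[symmetric])
  show "M * r *\<^sub>R N = r *\<^sub>R (M * N)" by transfer (simp only: matrix_scalar_ac scalar_matrix_assoc[symmetric])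
  show "(0 :: 'a sqmat) \<noteq> 1"
  proof transfer
    have "(mat 1 :: real^'a^'a) $ undefined $ undefined = 1" by (simp add: mat_def)
    then show "(0 :: real^'a^'a) \<noteq> mat 1" by auto
  qed
qed

end

instantiation sqmat :: (finite) real_normed_algebra_1
begin

lift_definition norm_sqmat :: "'a sqmat \<Rightarrow> real" is "\<lambda>M. onorm ((*v) M)" .
definition sgn_sqmat :: "'a sqmat \<Rightarrow> 'a sqmat" where "sgn_sqmat M = inverse (norm M) *\<^sub>R M"
definition dist_sqmat :: "'a sqmat \<Rightarrow> 'a sqmat \<Rightarrow> real" where "dist_sqmat M N = norm (M - N)"
definition uniformity_sqmat :: "('a sqmat \<times> 'a sqmat) filter" where
  "uniformity_sqmat = (INF e\<in>{0<..}. principal {(x, y). dist x y < e})"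
definition open_sqmat :: "'a sqmat set \<Rightarrow> bool" where
  "open_sqmat U \<longleftrightarrow> (\<forall>x\<in>U. \<forall>\<^sub>F (x', y) in uniformity. x' = x \<longrightarrow> y \<in> U)"

instance
proof
  fix M N :: "'a sqmat" and r :: real
  show "dist M N = norm (M - N)" by (rule dist_sqmat_def)
  show "sgn M = inverse (norm M) *\<^sub>R M" by (rule sgn_sqmat_def)
  show "(uniformity :: ('a sqmat \<times> 'a sqmat) filter) = (INF e\<in>{0<..}. principal {(x, y). dist x y < e})"
    by (rule uniformity_sqmat_def)
  show "open U \<longleftrightarrow> (\<forall>x\<in>U. \<forall>\<^sub>F (x', y) in uniformity. x' = x \<longrightarrow> y \<in> U)" for U :: "'a sqmat set"
    by (rule open_sqmat_def)
  show "norm M = 0 \<longleftrightarrow> M = 0"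
    by transfer (simp add: onorm_eq_0 matrix_eq)
  show "norm (M + N) \<le> norm M + norm N"
  proof transfer
    fix M N :: "real^'a^'a"
    have "(*v) (M + N) = (\<lambda>v. M *v v + N *v v)" by (rule ext) (rule matrix_vector_mult_add_rdistrib)
    then show "onorm ((*v) (M + N)) \<le> onorm ((*v) M) + onorm ((*v) N)"
      by (simp add: onorm_triangle)
  qed
  show "norm (r *\<^sub>R M) = \<bar>r\<bar> * norm M"
  proof transfer
    fix r and M :: "real^'a^'a"
    have "(*v) (r *\<^sub>R M) = (\<lambda>v. r *\<^sub>R (M *v v))" by (rule ext) (rule scaleR_matrix_vector_assoc[symmetric])
    then show "onorm ((*v) (r *\<^sub>R M)) = \<bar>r\<bar> * onorm ((*v) M)"
      by (simp add: onorm_scaleR)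
  qed
  show "norm (M * N) \<le> norm M * norm N"
  proof transfer
    fix M N :: "real^'a^'a"
    have "(*v) (M ** N) = (*v) M \<circ> (*v) N" by (rule ext) (simp add: matrix_vector_mul_assoc)
    then show "onorm ((*v) (M ** N)) \<le> onorm ((*v) M) * onorm ((*v) N)"
      by (simp add: onorm_compose)
  qed
  have "(*v) (mat 1 :: real^'a^'a) = (\<lambda>v. v)" by (rule ext) simp
  then show "norm (1 :: 'a sqmat) = 1"
    by transfer (simp add: onorm_id)
qed

end

lemma norm_to_matrix_le: "norm (to_matrix M) \<le> norm (M :: 'n::finite sqmat) * (real CARD('n) * real CARD('n))"
proof -
  have "norm (to_matrix M) \<le> (\<Sum>i\<in>UNIV. norm (to_matrix M $ i))"
    unfolding norm_vec_def by (rule L2_set_le_sum) simp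
  also have "\<dots> \<le> (\<Sum>i\<in>UNIV. \<Sum>j\<in>UNIV. \<bar>to_matrix M $ i $ j\<bar>)"
    by (intro sum_mono norm_le_l1_cart)
  also have "\<dots> \<le> (\<Sum>i\<in>(UNIV :: 'n set). \<Sum>j\<in>(UNIV :: 'n set). norm M)"
    by (intro sum_mono) (simp add: norm_sqmat.rep_eq matrix_component_le_onorm)
  finally show ?thesis by (simp add: ac_simps)
qed

lemma bounded_linear_to_matrix: "bounded_linear (to_matrix :: 'n::finite sqmat \<Rightarrow> _)"
  by (rule bounded_linear_intro[where K = "real CARD('n) * real CARD('n)"])
     (simp_all add: plus_sqmat.rep_eq scaleR_sqmat.rep_eq norm_to_matrix_le)

lemma bounded_linear_of_matrix: "bounded_linear (of_matrix :: _ \<Rightarrow> 'n::finite sqmat)"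
proof (rule bounded_linear_intro[where K = "real CARD('n) * real CARD('n)"])
  fix M :: "real^'n^'n"
  have "onorm ((*v) M) \<le> real CARD('n) * real CARD('n) * norm M"
    by (rule onorm_le_matrix_component) (rule order_trans[OF component_le_norm_cart Finite_Cartesian_Product.norm_nth_le])
  then show "norm (of_matrix M) \<le> norm M * (real CARD('n) * real CARD('n))"
    by (simp add: norm_sqmat.rep_eq of_matrix_inverse mult.commute)
qed (simp_all add: plus_sqmat_def scaleR_sqmat_def of_matrix_inverse)

instance sqmat :: (finite) banach
proof
  fix X :: "nat \<Rightarrow> 'a sqmat"
  assume "Cauchy X"
  then have "convergent (\<lambda>n. to_matrix (X n))"
    by (simp add: Cauchy_convergent_iff[symmetric] bounded_linear.Cauchy[OF bounded_linear_to_matrix])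
  then obtain L where "(\<lambda>n. to_matrix (X n)) \<longlonglongrightarrow> L"
    by (auto simp: convergent_def)
  then have "(\<lambda>n. of_matrix (to_matrix (X n))) \<longlonglongrightarrow> of_matrix L"
    by (rule bounded_linear.tendsto[OF bounded_linear_of_matrix])
  then show "convergent X"
    by (auto simp: convergent_def to_matrix_inverse)
qed

lemma to_matrix_power: "to_matrix (M ^ k) = matpow (to_matrix M) k"
  by (induction k) (simp_all add: one_sqmat.rep_eq times_sqmat.rep_eq)

lemma mat_exp_eq_exp: "mat_exp M = to_matrix (exp (of_matrix M))"
proof -
  have "to_matrix (exp (of_matrix M)) = (\<Sum>k. to_matrix (of_matrix M ^ k /\<^sub>R fact k))"
    unfolding exp_def by (rule bounded_linear.suminf[OF bounded_linear_to_matrix summable_exp_generic])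
  then show ?thesis
    by (simp add: mat_exp_def scaleR_sqmat.rep_eq to_matrix_power of_matrix_inverse divide_inverse_commute)
qed

lemma of_matrix_scaleR: "of_matrix (r *\<^sub>R M) = r *\<^sub>R of_matrix M"
  by (simp add: scaleR_sqmat_def of_matrix_inverse)

lemma mat_exp_scaleR_eq: "mat_exp (s *\<^sub>R M) = to_matrix (exp (s *\<^sub>R of_matrix M))"
  by (simp add: mat_exp_eq_exp of_matrix_scaleR)

lemma mat_exp_zero: "mat_exp (0 :: real^'n::finite^'n) = mat 1"
  by (simp add: mat_exp_eq_exp zero_sqmat_def[symmetric] one_sqmat.rep_eq)

lemma mat_exp_add_scaleR:
  "mat_exp (s *\<^sub>R M) ** mat_exp (r *\<^sub>R M) = mat_exp ((s + r) *\<^sub>R (M :: real^'n::finite^'n))"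
proof -
  have "(s *\<^sub>R of_matrix M) * (r *\<^sub>R of_matrix M) = (r *\<^sub>R of_matrix M) * (s *\<^sub>R of_matrix M)"
    by (simp add: mult_scaleR_left mult_scaleR_right)
  then have "exp ((s + r) *\<^sub>R of_matrix M) = exp (s *\<^sub>R of_matrix M) * exp (r *\<^sub>R of_matrix M)"
    by (simp add: scaleR_left_distrib exp_add_commuting)
  then show ?thesis
    by (simp add: mat_exp_scaleR_eq times_sqmat.rep_eq)
qed

lemma summable_mat_exp: "summable (\<lambda>k. (1 / fact k) *\<^sub>R matpow (M :: real^'n::finite^'n) k)"
  using bounded_linear.summable[OF bounded_linear_to_matrix summable_exp_generic[of "of_matrix M"]]
  by (simp add: scaleR_sqmat.rep_eq to_matrix_power of_matrix_inverse divide_inverse_commute)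

lemma matpow_commute: "matpow M k ** M = M ** matpow M k"
  by (induction k) (simp_all add: matrix_mul_assoc[symmetric])

lemma transpose_matpow: "transpose (matpow M k) = matpow (transpose M) k"
  by (induction k) (simp_all add: matrix_transpose_mul matpow_commute)

lemma bounded_linear_transpose: "bounded_linear (transpose :: real^'n::finite^'m::finite \<Rightarrow> _)"
  by (simp add: linear_conv_bounded_linear[symmetric] linearI transpose_def vec_eq_iff)

lemma transpose_mat_exp: "transpose (mat_exp M) = mat_exp (transpose (M :: real^'n::finite^'n))"
  unfolding mat_exp_def
  by (simp add: bounded_linear.suminf[OF bounded_linear_transpose summable_mat_exp]
      transpose_scalar transpose_matpow)

lemma bounded_bilinear_to_matrix_mult: "bounded_bilinear (\<lambda>(P :: 'n::finite sqmat) v. to_matrix P *v v)"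
proof
  fix P Q :: "'n sqmat" and u v :: "real^'n" and r :: real
  show "to_matrix (P + Q) *v v = to_matrix P *v v + to_matrix Q *v v"
    by (simp add: plus_sqmat.rep_eq matrix_vector_mult_add_rdistrib)
  show "to_matrix P *v (u + v) = to_matrix P *v u + to_matrix P *v v"
    by (simp add: matrix_vector_right_distrib)
  show "to_matrix (r *\<^sub>R P) *v v = r *\<^sub>R (to_matrix P *v v)"
    by (simp add: scaleR_sqmat.rep_eq scaleR_matrix_vector_assoc)
  show "to_matrix P *v (r *\<^sub>R v) = r *\<^sub>R (to_matrix P *v v)"
    by (simp add: matrix_vector_mult_scaleR)
  show "\<exists>K. \<forall>P v. norm (to_matrix (P :: 'n sqmat) *v v) \<le> norm P * norm v * K"
    by (rule exI[of _ 1]) (simp add: norm_sqmat.rep_eq onorm[OF matrix_vector_mul_bounded_linear])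
qed

lemma has_vector_derivative_mat_exp_mult:
  fixes M :: "real^'n::finite^'n"
  assumes "(x has_vector_derivative x') (at s within S)"
  shows "((\<lambda>s. mat_exp (s *\<^sub>R M) *v x s) has_vector_derivative
           mat_exp (s *\<^sub>R M) *v (x' + M *v x s)) (at s within S)"
proof -
  from bounded_bilinear.has_vector_derivative[OF bounded_bilinear_to_matrix_mult
      exp_scaleR_has_vector_derivative_right[of "of_matrix M"] assms]
  show ?thesis
    by (simp add: mat_exp_scaleR_eq times_sqmat.rep_eq matrix_vector_right_distrib
        matrix_vector_mul_assoc of_matrix_inverse)
qed

lemma continuous_on_mat_exp_mult:
  fixes M :: "real^'n::finite^'n"
  assumes "continuous_on S f" "continuous_on S y"
  shows "continuous_on S (\<lambda>s. mat_exp (f s *\<^sub>R M) *v y s)"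
proof -
  have "continuous_on UNIV (\<lambda>s. exp (s *\<^sub>R of_matrix M))"
    unfolding continuous_on_eq_continuous_within
    using has_vector_derivative_continuous[OF exp_scaleR_has_vector_derivative_right] by blast
  then have "continuous_on S (\<lambda>s. exp (f s *\<^sub>R of_matrix M))"
    using continuous_on_compose2[OF _ assms(1)] by blast
  then show ?thesis
    unfolding mat_exp_scaleR_eq
    by (rule bounded_bilinear.continuous_on[OF bounded_bilinear_to_matrix_mult _ assms(2)])
qed

lemma matrix_vector_mult_uminus: "(- A) *v x = - (A *v x :: real^'m)"
  by (simp add: matrix_vector_mult_def vec_eq_iff sum_negf[symmetric])

section \<open>Absolute continuity\<close>

definition disjoint_subintervals :: "real \<Rightarrow> real \<Rightarrow> nat \<Rightarrow> (nat \<Rightarrow> real) \<Rightarrow> (nat \<Rightarrow> real) \<Rightarrow> bool" where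
  "disjoint_subintervals a b k u v \<longleftrightarrow>
     (\<forall>i<k. a \<le> u i \<and> u i \<le> v i \<and> v i \<le> b) \<and> (\<forall>i<k. \<forall>j<k. i \<noteq> j \<longrightarrow> v i \<le> u j \<or> v j \<le> u i)"

lemma abs_continuous_on_iff:
  "abs_continuous_on a b f \<longleftrightarrow>
     (\<forall>\<epsilon>>0. \<exists>\<delta>>0. \<forall>k u v. disjoint_subintervals a b k u v \<and> (\<Sum>i<k. v i - u i) < \<delta> \<longrightarrow>
        (\<Sum>i<k. norm (f (v i) - f (u i))) < \<epsilon>)"
  unfolding abs_continuous_on_def disjoint_subintervals_def by (simp add: conj_assoc)

lemma abs_continuous_onD:
  assumes "abs_continuous_on a b f" "\<epsilon> > 0"
  obtains \<delta> where "\<delta> > 0"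
    "\<And>k u v. disjoint_subintervals a b k u v \<Longrightarrow> (\<Sum>i<k. v i - u i) < \<delta> \<Longrightarrow>
       (\<Sum>i<k. norm (f (v i) - f (u i))) < \<epsilon>"
  using assms unfolding abs_continuous_on_iff by (meson that)

lemma abs_continuous_onI:
  assumes "\<And>\<epsilon>. \<epsilon> > 0 \<Longrightarrow> \<exists>\<delta>>0. \<forall>k u v. disjoint_subintervals a b k u v \<and> (\<Sum>i<k. v i - u i) < \<delta> \<longrightarrow>
        (\<Sum>i<k. norm (f (v i) - f (u i))) < \<epsilon>"
  shows "abs_continuous_on a b f"
  using assms by (simp add: abs_continuous_on_iff)

lemma abs_continuous_on_imp_continuous_on:
  assumes "abs_continuous_on a b f"
  shows "continuous_on {a..b} f"
  unfolding continuous_on_iff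
proof (intro ballI allI impI)
  fix s \<epsilon> :: real assume s: "s \<in> {a..b}" and "\<epsilon> > 0"
  then obtain \<delta> where "\<delta> > 0" and \<delta>: "\<And>k u v. disjoint_subintervals a b k u v \<Longrightarrow>
      (\<Sum>i<k. v i - u i) < \<delta> \<Longrightarrow> (\<Sum>i<k. norm (f (v i) - f (u i))) < \<epsilon>"
    using abs_continuous_onD[OF assms] by blast
  have "dist (f s') (f s) < \<epsilon>" if "s' \<in> {a..b}" "dist s' s < \<delta>" for s'
  proof -
    have "disjoint_subintervals a b 1 (\<lambda>_. min s s') (\<lambda>_. max s s')"
      using s that(1) by (auto simp: disjoint_subintervals_def)
    moreover have "(\<Sum>i<(1::nat). max s s' - min s s') < \<delta>"
      using that(2) by (simp add: dist_real_def)
    ultimately have "norm (f (max s s') - f (min s s')) < \<epsilon>"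
      using \<delta>[of 1 "\<lambda>_. min s s'" "\<lambda>_. max s s'"] by simp
    then show ?thesis
      by (cases "s \<le> s'") (simp_all add: dist_norm norm_minus_commute max_def min_def)
  qed
  with \<open>\<delta> > 0\<close> show "\<exists>\<delta>>0. \<forall>s'\<in>{a..b}. dist s' s < \<delta> \<longrightarrow> dist (f s') (f s) < \<epsilon>"
    by blast
qed

lemma lipschitz_on_imp_abs_continuous_on:
  assumes "L-lipschitz_on {a..b} f"
  shows "abs_continuous_on a b f"
proof (rule abs_continuous_onI)
  fix \<epsilon> :: real assume "\<epsilon> > 0"
  have "L \<ge> 0" using assms by (rule lipschitz_on_nonneg)
  have "(\<Sum>i<k. norm (f (v i) - f (u i))) < \<epsilon>"
    if "disjoint_subintervals a b k u v" "(\<Sum>i<k. v i - u i) < \<epsilon> / (L + 1)" for k u v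
  proof -
    have "(\<Sum>i<k. norm (f (v i) - f (u i))) \<le> (\<Sum>i<k. L * (v i - u i))"
    proof (rule sum_mono)
      fix i assume "i \<in> {..<k}"
      then have "a \<le> u i" "u i \<le> v i" "v i \<le> b"
        using that(1) by (auto simp: disjoint_subintervals_def)
      then show "norm (f (v i) - f (u i)) \<le> L * (v i - u i)"
        using lipschitz_on_normD[OF assms, of "v i" "u i"] by simp
    qed
    also have "\<dots> \<le> L * (\<epsilon> / (L + 1))"
      using mult_left_mono[OF less_imp_le[OF that(2)] \<open>L \<ge> 0\<close>] by (simp add: sum_distrib_left)
    also have "\<dots> < \<epsilon>"
      using \<open>\<epsilon> > 0\<close> \<open>L \<ge> 0\<close> by (simp add: field_simps)
    finally show ?thesis .
  qed
  then show "\<exists>\<delta>>0. \<forall>k u v. disjoint_subintervals a b k u v \<and> (\<Sum>i<k. v i - u i) < \<delta> \<longrightarrow>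
      (\<Sum>i<k. norm (f (v i) - f (u i))) < \<epsilon>"
    using \<open>\<epsilon> > 0\<close> \<open>L \<ge> 0\<close> by (intro exI[of _ "\<epsilon> / (L + 1)"]) auto
qed

lemma abs_continuous_on_bounded:
  assumes "abs_continuous_on a b f"
  obtains B where "\<And>s. s \<in> {a..b} \<Longrightarrow> norm (f s) \<le> B"
proof -
  have "bounded (f ` {a..b})"
    by (intro compact_imp_bounded compact_continuous_image abs_continuous_on_imp_continuous_on assms compact_Icc)
  then show ?thesis using that unfolding bounded_iff by blast
qed

lemma (in bounded_bilinear) norm_prod_diff_le:
  assumes K: "\<And>a b. norm (prod a b) \<le> norm a * norm b * K" "0 \<le> K"
    and "norm x' \<le> M" "norm y \<le> M"
  shows "norm (prod x y - prod x' y') \<le> K * M * (norm (x - x') + norm (y - y'))"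
proof -
  have "prod x y - prod x' y' = prod (x - x') y + prod x' (y - y')"
    by (simp add: diff_left diff_right)
  also have "norm \<dots> \<le> norm (x - x') * M * K + M * norm (y - y') * K"
    using assms by (intro norm_triangle_le add_mono order_trans[OF K(1)] mult_right_mono mult_left_mono mult_mono) auto
  also have "\<dots> = K * M * (norm (x - x') + norm (y - y'))"
    by (simp add: algebra_simps)
  finally show ?thesis .
qed

lemma (in bounded_bilinear) abs_continuous_on:
  assumes f: "abs_continuous_on a b f" and g: "abs_continuous_on a b g"
  shows "abs_continuous_on a b (\<lambda>s. prod (f s) (g s))"
proof (rule abs_continuous_onI)
  fix \<epsilon> :: real assume "\<epsilon> > 0"
  obtain K where K: "K > 0" "\<And>x y. norm (prod x y) \<le> norm x * norm y * K"
    using pos_bounded by blast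
  obtain Mf where Mf: "\<And>s. s \<in> {a..b} \<Longrightarrow> norm (f s) \<le> Mf"
    using abs_continuous_on_bounded[OF f] by blast
  obtain Mg where Mg: "\<And>s. s \<in> {a..b} \<Longrightarrow> norm (g s) \<le> Mg"
    using abs_continuous_on_bounded[OF g] by blast
  define c where "c = K * (\<bar>Mf\<bar> + \<bar>Mg\<bar> + 1)"
  have "c > 0" using K(1) by (simp add: c_def add_pos_nonneg)
  have step: "norm (prod (f t) (g t) - prod (f s) (g s)) \<le> c * (norm (f t - f s) + norm (g t - g s))"
    if "s \<in> {a..b}" "t \<in> {a..b}" for s t
    unfolding c_def using K Mf[OF that(1)] Mg[OF that(2)] by (intro norm_prod_diff_le) auto
  define \<eta> where "\<eta> = \<epsilon> / (2 * c)"
  have "\<eta> > 0" using \<open>\<epsilon> > 0\<close> \<open>c > 0\<close> by (simp add: \<eta>_def)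
  obtain \<delta>f where "\<delta>f > 0" and \<delta>f: "\<And>k u v. disjoint_subintervals a b k u v \<Longrightarrow>
      (\<Sum>i<k. v i - u i) < \<delta>f \<Longrightarrow> (\<Sum>i<k. norm (f (v i) - f (u i))) < \<eta>"
    using abs_continuous_onD[OF f \<open>\<eta> > 0\<close>] by blast
  obtain \<delta>g where "\<delta>g > 0" and \<delta>g: "\<And>k u v. disjoint_subintervals a b k u v \<Longrightarrow>
      (\<Sum>i<k. v i - u i) < \<delta>g \<Longrightarrow> (\<Sum>i<k. norm (g (v i) - g (u i))) < \<eta>"
    using abs_continuous_onD[OF g \<open>\<eta> > 0\<close>] by blast
  have "(\<Sum>i<k. norm (prod (f (v i)) (g (v i)) - prod (f (u i)) (g (u i)))) < \<epsilon>"
    if uv: "disjoint_subintervals a b k u v" "(\<Sum>i<k. v i - u i) < min \<delta>f \<delta>g" for k u v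
  proof -
    have "(\<Sum>i<k. norm (prod (f (v i)) (g (v i)) - prod (f (u i)) (g (u i))))
        \<le> (\<Sum>i<k. c * (norm (f (v i) - f (u i)) + norm (g (v i) - g (u i))))"
      using uv(1) by (intro sum_mono step) (auto simp: disjoint_subintervals_def)
    also have "\<dots> = c * ((\<Sum>i<k. norm (f (v i) - f (u i))) + (\<Sum>i<k. norm (g (v i) - g (u i))))"
      by (simp add: distrib_left sum_distrib_left sum.distrib)
    also have "\<dots> < c * (\<eta> + \<eta>)"
      using \<delta>f[OF uv(1)] \<delta>g[OF uv(1)] uv(2) \<open>c > 0\<close> by (intro mult_strict_left_mono add_strict_mono) auto
    also have "\<dots> = \<epsilon>"
      using \<open>c > 0\<close> by (simp add: \<eta>_def)
    finally show ?thesis .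
  qed
  then show "\<exists>\<delta>>0. \<forall>k u v. disjoint_subintervals a b k u v \<and> (\<Sum>i<k. v i - u i) < \<delta> \<longrightarrow>
      (\<Sum>i<k. norm (prod (f (v i)) (g (v i)) - prod (f (u i)) (g (u i)))) < \<epsilon>"
    using \<open>\<delta>f > 0\<close> \<open>\<delta>g > 0\<close> by (intro exI[of _ "min \<delta>f \<delta>g"]) auto
qed

lemma abs_continuous_on_exp_scaleR:
  "abs_continuous_on a b (\<lambda>s. exp (s *\<^sub>R (G :: 'a::{real_normed_algebra_1,banach})))"
proof (rule lipschitz_on_imp_abs_continuous_on)
  define C where "C = exp ((\<bar>a\<bar> + \<bar>b\<bar>) * norm G) * norm G"
  show "C-lipschitz_on {a..b} (\<lambda>s. exp (s *\<^sub>R G))"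
  proof (rule bounded_derivative_imp_lipschitz)
    show "((\<lambda>s. exp (s *\<^sub>R G)) has_derivative (\<lambda>h. h *\<^sub>R (exp (s *\<^sub>R G) * G))) (at s within {a..b})" for s
      using exp_scaleR_has_vector_derivative_right unfolding has_vector_derivative_def .
    show "onorm (\<lambda>h. h *\<^sub>R (exp (s *\<^sub>R G) * G)) \<le> C" if "s \<in> {a..b}" for s
    proof -
      have "norm (exp (s *\<^sub>R G)) \<le> exp ((\<bar>a\<bar> + \<bar>b\<bar>) * norm G)"
        using that by (intro order_trans[OF norm_exp]) (auto intro!: mult_right_mono)
      then have "norm (exp (s *\<^sub>R G) * G) \<le> C"
        unfolding C_def by (intro order_trans[OF norm_mult_ineq] mult_right_mono) auto
      then show ?thesis
        by (simp add: onorm_scaleR_left[OF bounded_linear_ident] onorm_id)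
    qed
    show "0 \<le> C" by (simp add: C_def)
  qed simp
qed

lemma abs_continuous_on_mat_exp_mult:
  fixes M :: "real^'n::finite^'n"
  assumes "abs_continuous_on a b x"
  shows "abs_continuous_on a b (\<lambda>s. mat_exp (s *\<^sub>R M) *v x s)"
  unfolding mat_exp_scaleR_eq
  by (rule bounded_bilinear.abs_continuous_on[OF bounded_bilinear_to_matrix_mult
        abs_continuous_on_exp_scaleR assms])

section \<open>Fundamental theorem of calculus for absolutely continuous functions\<close>

lemma tagged_partial_division_of_real_intervalE:
  assumes "D tagged_partial_division_of {a..b :: real}" "(x, K) \<in> D"
  obtains c d where "K = {c..d}" "a \<le> c" "c \<le> d" "d \<le> b" "x \<in> K"
proof -
  obtain c d where "K = cbox c d" using tagged_partial_division_ofD(4)[OF assms] by blast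
  moreover have "x \<in> K" "K \<subseteq> {a..b}" using tagged_partial_division_ofD(2,3)[OF assms] by auto
  ultimately show ?thesis using that by auto
qed

lemma disjoint_open_intervals_le:
  fixes u v u' v' :: real
  assumes "u < v" "u' < v'" "{u<..<v} \<inter> {u'<..<v'} = {}"
  shows "v \<le> u' \<or> v' \<le> u"
proof (rule ccontr)
  assume "\<not> (v \<le> u' \<or> v' \<le> u)"
  then have "(max u u' + min v v') / 2 \<in> {u<..<v} \<inter> {u'<..<v'}"
    using assms(1,2) by (auto simp: max_def min_def)
  with assms(3) show False by blast
qed

lemma tagged_partial_division_disjoint_subintervals:
  assumes D: "D tagged_partial_division_of {a..b}" and e: "bij_betw e {..<k} D"
    and nondegenerate: "\<And>x K. (x, K) \<in> D \<Longrightarrow> measure lborel K \<noteq> 0"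
  shows "disjoint_subintervals a b k (\<lambda>i. Inf (snd (e i))) (\<lambda>i. Sup (snd (e i)))"
proof -
  have eD: "(fst (e i), snd (e i)) \<in> D" if "i < k" for i
    using e that by (auto simp: bij_betw_def)
  have bounds: "a \<le> Inf (snd (e i)) \<and> Inf (snd (e i)) \<le> Sup (snd (e i)) \<and> Sup (snd (e i)) \<le> b"
    if "i < k" for i
    by (rule tagged_partial_division_of_real_intervalE[OF D eD[OF that]]) simp
  have "Sup (snd (e i)) \<le> Inf (snd (e j)) \<or> Sup (snd (e j)) \<le> Inf (snd (e i))"
    if ij: "i < k" "j < k" "i \<noteq> j" for i j
  proof -
    obtain c d where K: "snd (e i) = {c..d}" "c \<le> d"
      using tagged_partial_division_of_real_intervalE[OF D eD[OF ij(1)]] by metis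
    obtain c' d' where K': "snd (e j) = {c'..d'}" "c' \<le> d'"
      using tagged_partial_division_of_real_intervalE[OF D eD[OF ij(2)]] by metis
    have "c < d" "c' < d'"
      using K K' nondegenerate[OF eD[OF ij(1)]] nondegenerate[OF eD[OF ij(2)]] by auto
    moreover have "e i \<noteq> e j"
      using e ij by (auto simp: bij_betw_def inj_on_def)
    then have "interior (snd (e i)) \<inter> interior (snd (e j)) = {}"
      using tagged_partial_division_ofD(5)[OF D eD[OF ij(1)] eD[OF ij(2)]] by simp
    ultimately show ?thesis
      using disjoint_open_intervals_le[of c d c' d'] K K' by simp
  qed
  with bounds show ?thesis
    by (simp add: disjoint_subintervals_def)
qed

lemma tagged_partial_division_enumerate:
  assumes D: "D tagged_partial_division_of {a..b}"
  obtains k u v where "disjoint_subintervals a b k u v"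
    "(\<Sum>i<k. v i - u i) = (\<Sum>(x, K)\<in>D. measure lborel K)"
    "(\<Sum>i<k. norm (f (v i) - f (u i))) = (\<Sum>(x, K)\<in>D. norm (f (Sup K) - f (Inf K)))"
proof -
  define D' where "D' = {(x, K) \<in> D. measure lborel K \<noteq> 0}"
  have "D' \<subseteq> D" by (auto simp: D'_def)
  then have "finite D'" using tagged_partial_division_ofD(1)[OF D] by (rule finite_subset)
  obtain e where e: "bij_betw e {..<card D'} D'"
    using ex_bij_betw_nat_finite[OF \<open>finite D'\<close>] by (auto simp: atLeast0LessThan)
  have length: "measure lborel K = Sup K - Inf K" if "(x, K) \<in> D" for x K
    by (rule tagged_partial_division_of_real_intervalE[OF D that]) simp
  then have degenerate: "Sup K = Inf K" if "(x, K) \<in> D" "measure lborel K = 0" for x K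
    using that by fastforce
  have "disjoint_subintervals a b (card D') (\<lambda>i. Inf (snd (e i))) (\<lambda>i. Sup (snd (e i)))"
    by (rule tagged_partial_division_disjoint_subintervals
        [OF tagged_partial_division_subset[OF D \<open>D' \<subseteq> D\<close>] e]) (simp add: D'_def)
  moreover have "(\<Sum>i<card D'. Sup (snd (e i)) - Inf (snd (e i))) = (\<Sum>(x, K)\<in>D. measure lborel K)"
  proof -
    have "(\<Sum>i<card D'. Sup (snd (e i)) - Inf (snd (e i))) = (\<Sum>(x, K)\<in>D'. measure lborel K)"
      using \<open>D' \<subseteq> D\<close> length
      by (auto simp: sum.reindex_bij_betw[OF e, of "\<lambda>p. Sup (snd p) - Inf (snd p)"] intro!: sum.cong)
    also have "\<dots> = (\<Sum>(x, K)\<in>D. measure lborel K)"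
      using tagged_partial_division_ofD(1)[OF D] by (intro sum.mono_neutral_left) (auto simp: D'_def)
    finally show ?thesis .
  qed
  moreover have "(\<Sum>i<card D'. norm (f (Sup (snd (e i))) - f (Inf (snd (e i)))))
      = (\<Sum>(x, K)\<in>D. norm (f (Sup K) - f (Inf K)))"
  proof -
    have "(\<Sum>i<card D'. norm (f (Sup (snd (e i))) - f (Inf (snd (e i)))))
        = (\<Sum>(x, K)\<in>D'. norm (f (Sup K) - f (Inf K)))"
      by (simp add: sum.reindex_bij_betw[OF e, of "\<lambda>p. norm (f (Sup (snd p)) - f (Inf (snd p)))"] split_def)
    also have "\<dots> = (\<Sum>(x, K)\<in>D. norm (f (Sup K) - f (Inf K)))"
      using tagged_partial_division_ofD(1)[OF D] degenerate
      by (intro sum.mono_neutral_left) (auto simp: D'_def)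
    finally show ?thesis .
  qed
  ultimately show ?thesis by (rule that)
qed

lemma abs_continuous_on_tagged_partial_division:
  assumes "abs_continuous_on a b f" "\<epsilon> > 0"
  obtains \<delta> where "\<delta> > 0"
    "\<And>D. D tagged_partial_division_of {a..b} \<Longrightarrow> (\<Sum>(x, K)\<in>D. measure lborel K) < \<delta> \<Longrightarrow>
       (\<Sum>(x, K)\<in>D. norm (f (Sup K) - f (Inf K))) < \<epsilon>"
proof -
  obtain \<delta> where "\<delta> > 0" and \<delta>: "\<And>k u v. disjoint_subintervals a b k u v \<Longrightarrow>
      (\<Sum>i<k. v i - u i) < \<delta> \<Longrightarrow> (\<Sum>i<k. norm (f (v i) - f (u i))) < \<epsilon>"
    using abs_continuous_onD[OF assms] by blast
  have "(\<Sum>(x, K)\<in>D. norm (f (Sup K) - f (Inf K))) < \<epsilon>"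
    if "D tagged_partial_division_of {a..b}" "(\<Sum>(x, K)\<in>D. measure lborel K) < \<delta>" for D
  proof (rule tagged_partial_division_enumerate[OF that(1), of f])
    fix k u v assume "disjoint_subintervals a b k u v"
      and "(\<Sum>i<k. v i - u i) = (\<Sum>(x, K)\<in>D. measure lborel K)"
      and "(\<Sum>i<k. norm (f (v i) - f (u i))) = (\<Sum>(x, K)\<in>D. norm (f (Sup K) - f (Inf K)))"
    then show ?thesis using \<delta>[of k u v] that(2) by simp
  qed
  then show ?thesis by (rule that[OF \<open>\<delta> > 0\<close>])
qed

lemma negligible_outer_open:
  assumes "negligible N" "\<epsilon> > 0"
  obtains U where "open U" "N \<subseteq> U" "U \<in> lmeasurable" "measure lebesgue U < \<epsilon>"
proof -
  obtain T where T: "open T" "N \<subseteq> T" "T - N \<in> lmeasurable" "emeasure lebesgue (T - N) < ennreal \<epsilon>"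
    using sets_lebesgue_outer_open[OF negligible_imp_sets[OF assms(1)] assms(2)] by blast
  have N: "N \<in> lmeasurable" "measure lebesgue N = 0"
    using assms(1) by (auto simp: negligible_iff_measure)
  have T_eq: "T = (T - N) \<union> N" using T(2) by auto
  have "T \<in> lmeasurable"
    by (subst T_eq) (rule fmeasurable.Un[OF T(3) N(1)])
  have "measure lebesgue T \<le> measure lebesgue (T - N) + measure lebesgue N"
    by (subst T_eq) (rule measure_Un_le; use T(3) N(1) in auto)
  moreover have "measure lebesgue (T - N) < \<epsilon>"
    using T(3,4) assms(2) by (simp add: emeasure_eq_measure2 ennreal_less_iff)
  ultimately show ?thesis using that T(1,2) N(2) \<open>T \<in> lmeasurable\<close> by auto
qed

lemma tagged_partial_division_content_le_measure:
  assumes D: "D tagged_partial_division_of S" and U: "U \<in> lmeasurable" "\<And>x K. (x, K) \<in> D \<Longrightarrow> K \<subseteq> U"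
  shows "(\<Sum>(x, K)\<in>D. measure lborel K) \<le> measure lebesgue U"
proof -
  have "(\<Sum>(x, K)\<in>D. measure lborel K) = (\<Sum>K\<in>snd ` D. measure lborel K)"
    by (rule sum.over_tagged_division_lemma[OF tagged_partial_division_of_Union_self[OF D]])
       (simp add: content_eq_0_interior)
  also have "\<dots> = (\<Sum>K\<in>snd ` D. measure lebesgue K)"
  proof (rule sum.cong)
    fix K assume "K \<in> snd ` D"
    then obtain c d where "K = cbox c d" using tagged_partial_division_ofD(4)[OF D] by force
    then show "measure lborel K = measure lebesgue K" by simp
  qed simp
  also have "\<dots> = measure lebesgue (\<Union>(snd ` D))"
    by (rule content_division[OF partial_division_of_tagged_division[OF D]])
  also have "\<dots> \<le> measure lebesgue U"
  proof (rule measure_mono_fmeasurable)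
    show "\<Union>(snd ` D) \<subseteq> U" using U(2) by force
  qed (use U(1) lmeasurable_division[OF partial_division_of_tagged_division[OF D]] in auto)
  finally show ?thesis .
qed

lemma tagged_interval_derivative_estimate:
  fixes g :: "real \<Rightarrow> 'a::real_normed_vector"
  assumes K: "K = {c..d}" "x \<in> K"
    and est: "\<And>y. y \<in> K \<Longrightarrow> norm (g y - g x - (y - x) *\<^sub>R g') \<le> \<epsilon> * \<bar>y - x\<bar>"
  shows "norm (measure lborel K *\<^sub>R g' - (g (Sup K) - g (Inf K))) \<le> \<epsilon> * measure lborel K"
proof -
  have "c \<le> x" "x \<le> d" using K by auto
  have "(d - c) *\<^sub>R g' - (g d - g c) = (g c - g x - (c - x) *\<^sub>R g') - (g d - g x - (d - x) *\<^sub>R g')"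
    by (simp add: algebra_simps)
  also have "norm \<dots> \<le> \<epsilon> * (x - c) + \<epsilon> * (d - x)"
    using est[of c] est[of d] K \<open>c \<le> x\<close> \<open>x \<le> d\<close>
    by (intro norm_triangle_le_diff) (rule add_mono; simp)
  also have "\<dots> = \<epsilon> * (d - c)"
    by (simp add: algebra_simps)
  finally show ?thesis using K \<open>c \<le> x\<close> \<open>x \<le> d\<close> by simp
qed

lemma tagged_division_riemann_sum_estimate:
  fixes g :: "real \<Rightarrow> 'a::real_normed_vector"
  assumes "a \<le> b" and D: "D tagged_division_of {a..b}" and "0 \<le> \<epsilon>"
    and est: "\<And>x K y. (x, K) \<in> D \<Longrightarrow> x \<notin> N \<Longrightarrow> y \<in> K \<Longrightarrow>
      norm (g y - g x - (y - x) *\<^sub>R g' x) \<le> \<epsilon> * \<bar>y - x\<bar>"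
  shows "norm ((\<Sum>(x, K)\<in>D. measure lborel K *\<^sub>R (if x \<in> N then 0 else g' x)) - (g b - g a))
           \<le> \<epsilon> * (b - a) + (\<Sum>(x, K)\<in>{p \<in> D. fst p \<in> N}. norm (g (Sup K) - g (Inf K)))"
proof -
  have partial: "D tagged_partial_division_of {a..b}"
    using D by (simp add: tagged_division_of_def)
  have "norm ((\<Sum>(x, K)\<in>D. measure lborel K *\<^sub>R (if x \<in> N then 0 else g' x)) - (g b - g a))
      = norm (\<Sum>(x, K)\<in>D. measure lborel K *\<^sub>R (if x \<in> N then 0 else g' x) - (g (Sup K) - g (Inf K)))"
    by (simp add: additive_tagged_division_1[OF \<open>a \<le> b\<close> D, symmetric] sum_subtractf split_def)
  also have "\<dots> \<le> (\<Sum>(x, K)\<in>D. \<epsilon> * measure lborel K + (if x \<in> N then norm (g (Sup K) - g (Inf K)) else 0))"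
  proof (rule sum_norm_le, clarify)
    fix x K assume xK: "(x, K) \<in> D"
    show "norm (measure lborel K *\<^sub>R (if x \<in> N then 0 else g' x) - (g (Sup K) - g (Inf K)))
        \<le> \<epsilon> * measure lborel K + (if x \<in> N then norm (g (Sup K) - g (Inf K)) else 0)"
    proof (cases "x \<in> N")
      case False
      obtain c d where "K = {c..d}" "x \<in> K"
        using tagged_partial_division_of_real_intervalE[OF partial xK] by metis
      with False show ?thesis
        using tagged_interval_derivative_estimate[of K c d x g "g' x" \<epsilon>] est[OF xK] by simp
    qed (use \<open>0 \<le> \<epsilon>\<close> in \<open>simp add: norm_minus_commute[of "g (Inf K)"]\<close>)
  qed
  also have "\<dots> = \<epsilon> * (\<Sum>(x, K)\<in>D. measure lborel K)
      + (\<Sum>p\<in>D. if fst p \<in> N then norm (g (Sup (snd p)) - g (Inf (snd p))) else 0)"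
    by (simp add: sum.distrib sum_distrib_left split_def)
  also have "\<dots> = \<epsilon> * (b - a) + (\<Sum>(x, K)\<in>{p \<in> D. fst p \<in> N}. norm (g (Sup K) - g (Inf K)))"
    using additive_content_tagged_division[of D a b] D \<open>a \<le> b\<close>
    by (simp add: sum.inter_filter[OF tagged_division_of_finite[OF D]] split_def)
  finally show ?thesis .
qed

lemma gauge_derivative_off_open:
  fixes g :: "real \<Rightarrow> 'a::real_normed_vector"
  assumes "open U" "N \<subseteq> U" "\<epsilon> > 0"
    and der: "\<And>x. x \<in> S - N \<Longrightarrow> (g has_vector_derivative g' x) (at x within S)"
  obtains \<gamma> where "gauge \<gamma>" "\<And>x. x \<in> N \<Longrightarrow> \<gamma> x \<subseteq> U"
    "\<And>x y. x \<in> S - N \<Longrightarrow> y \<in> \<gamma> x \<inter> S \<Longrightarrow> norm (g y - g x - (y - x) *\<^sub>R g' x) \<le> \<epsilon> * \<bar>y - x\<bar>"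
proof -
  have "\<exists>r>0. (x \<in> N \<longrightarrow> ball x r \<subseteq> U) \<and> (x \<in> S - N \<longrightarrow>
      (\<forall>y\<in>S. norm (y - x) < r \<longrightarrow> norm (g y - g x - (y - x) *\<^sub>R g' x) \<le> \<epsilon> * norm (y - x)))" for x
  proof (cases "x \<in> N")
    case True
    then show ?thesis using assms(1,2) open_contains_ball by blast
  next
    case False
    then show ?thesis
    proof (cases "x \<in> S")
      case True
      with False der[of x] \<open>\<epsilon> > 0\<close> show ?thesis
        unfolding has_vector_derivative_def has_derivative_within_alt by auto
    qed (auto intro: exI[of _ 1])
  qed
  then obtain r where r: "\<And>x. r x > 0" "\<And>x. x \<in> N \<Longrightarrow> ball x (r x) \<subseteq> U"
    "\<And>x y. x \<in> S - N \<Longrightarrow> y \<in> S \<Longrightarrow> norm (y - x) < r x \<Longrightarrow>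
       norm (g y - g x - (y - x) *\<^sub>R g' x) \<le> \<epsilon> * norm (y - x)"
    by metis
  show ?thesis
  proof (rule that[of "\<lambda>x. ball x (r x)"])
    show "gauge (\<lambda>x. ball x (r x))" using r(1) by (simp add: gauge_def)
  qed (use r(2,3) in \<open>auto simp: dist_norm norm_minus_commute\<close>)
qed

text \<open>
  At tags off \<open>N\<close> the gauge is fine enough for the derivative estimate; at tags in \<open>N\<close> it keeps
  the intervals inside an open \<open>U \<supseteq> N\<close> of small measure, where absolute continuity makes the
  increments of \<open>g\<close> small.
\<close>

lemma abs_continuous_gauge_estimate:
  fixes g :: "real \<Rightarrow> 'a::real_normed_vector"
  assumes "a \<le> b" and ac: "abs_continuous_on a b g" and "negligible N" "0 < \<epsilon>" "0 < \<eta>"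
    and der: "\<And>x. x \<in> {a..b} - N \<Longrightarrow> (g has_vector_derivative g' x) (at x within {a..b})"
  obtains \<gamma> where "gauge \<gamma>"
    "\<And>D. D tagged_division_of {a..b} \<Longrightarrow> \<gamma> fine D \<Longrightarrow>
       norm ((\<Sum>(x, K)\<in>D. measure lborel K *\<^sub>R (if x \<in> N then 0 else g' x)) - (g b - g a)) < \<epsilon> * (b - a) + \<eta>"
proof -
  obtain \<delta> where "\<delta> > 0" and \<delta>: "\<And>D. D tagged_partial_division_of {a..b} \<Longrightarrow>
      (\<Sum>(x, K)\<in>D. measure lborel K) < \<delta> \<Longrightarrow> (\<Sum>(x, K)\<in>D. norm (g (Sup K) - g (Inf K))) < \<eta>"
    using abs_continuous_on_tagged_partial_division[OF ac \<open>0 < \<eta>\<close>] by blast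
  obtain U where U: "open U" "N \<subseteq> U" "U \<in> lmeasurable" "measure lebesgue U < \<delta>"
    using negligible_outer_open[OF \<open>negligible N\<close> \<open>\<delta> > 0\<close>] by blast
  obtain \<gamma> where "gauge \<gamma>" and \<gamma>N: "\<And>x. x \<in> N \<Longrightarrow> \<gamma> x \<subseteq> U"
    and \<gamma>der: "\<And>x y. x \<in> {a..b} - N \<Longrightarrow> y \<in> \<gamma> x \<inter> {a..b} \<Longrightarrow>
        norm (g y - g x - (y - x) *\<^sub>R g' x) \<le> \<epsilon> * \<bar>y - x\<bar>"
    using gauge_derivative_off_open[OF U(1,2) \<open>0 < \<epsilon>\<close> der] by blast
  have "norm ((\<Sum>(x, K)\<in>D. measure lborel K *\<^sub>R (if x \<in> N then 0 else g' x)) - (g b - g a)) < \<epsilon> * (b - a) + \<eta>"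
    if D: "D tagged_division_of {a..b}" and fine: "\<gamma> fine D" for D
  proof -
    have DN: "{p \<in> D. fst p \<in> N} tagged_partial_division_of {a..b}"
      using D unfolding tagged_division_of_def by (rule tagged_partial_division_subset[OF conjunct1]) auto
    have "(\<Sum>(x, K)\<in>{p \<in> D. fst p \<in> N}. measure lborel K) \<le> measure lebesgue U"
    proof (rule tagged_partial_division_content_le_measure[OF DN U(3)])
      fix x K assume "(x, K) \<in> {p \<in> D. fst p \<in> N}"
      then show "K \<subseteq> U" using fineD[OF fine, of x K] \<gamma>N[of x] by auto
    qed
    then have "(\<Sum>(x, K)\<in>{p \<in> D. fst p \<in> N}. norm (g (Sup K) - g (Inf K))) < \<eta>"
      using U(4) by (intro \<delta>[OF DN]) simp
    moreover have "norm (g y - g x - (y - x) *\<^sub>R g' x) \<le> \<epsilon> * \<bar>y - x\<bar>"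
      if "(x, K) \<in> D" "x \<notin> N" "y \<in> K" for x K y
    proof (rule \<gamma>der)
      show "x \<in> {a..b} - N" using that tagged_division_ofD(2,3)[OF D that(1)] by auto
      show "y \<in> \<gamma> x \<inter> {a..b}" using that tagged_division_ofD(3)[OF D that(1)] fineD[OF fine that(1)] by auto
    qed
    then have "norm ((\<Sum>(x, K)\<in>D. measure lborel K *\<^sub>R (if x \<in> N then 0 else g' x)) - (g b - g a))
        \<le> \<epsilon> * (b - a) + (\<Sum>(x, K)\<in>{p \<in> D. fst p \<in> N}. norm (g (Sup K) - g (Inf K)))"
      using \<open>0 < \<epsilon>\<close> by (intro tagged_division_riemann_sum_estimate[OF \<open>a \<le> b\<close> D]) auto
    ultimately show ?thesis by linarith
  qed
  then show ?thesis by (rule that[OF \<open>gauge \<gamma>\<close>])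
qed

lemma fundamental_theorem_of_calculus_abs_continuous:
  fixes g :: "real \<Rightarrow> 'a::banach"
  assumes "a \<le> b" and ac: "abs_continuous_on a b g" and "negligible N"
    and der: "\<And>x. x \<in> {a..b} - N \<Longrightarrow> (g has_vector_derivative g' x) (at x within {a..b})"
  shows "(g' has_integral (g b - g a)) {a..b}"
proof -
  have "((\<lambda>x. if x \<in> N then 0 else g' x) has_integral (g b - g a)) {a..b}"
    unfolding has_integral_real
  proof (intro allI impI)
    fix e :: real assume "e > 0"
    define \<epsilon> where "\<epsilon> = e / 2 / (b - a + 1)"
    have "\<epsilon> > 0" using \<open>e > 0\<close> \<open>a \<le> b\<close> by (simp add: \<epsilon>_def)
    have "\<epsilon> * (b - a) < \<epsilon> * (b - a + 1)" using \<open>\<epsilon> > 0\<close> by simp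
    also have "\<dots> = e / 2" using \<open>a \<le> b\<close> unfolding \<epsilon>_def by (simp add: field_simps)
    finally have "\<epsilon> * (b - a) + e / 2 < e" by simp
    obtain \<gamma> where "gauge \<gamma>" and \<gamma>: "\<And>D. D tagged_division_of {a..b} \<Longrightarrow> \<gamma> fine D \<Longrightarrow>
        norm ((\<Sum>(x, K)\<in>D. measure lborel K *\<^sub>R (if x \<in> N then 0 else g' x)) - (g b - g a)) < \<epsilon> * (b - a) + e / 2"
      using abs_continuous_gauge_estimate[OF \<open>a \<le> b\<close> ac \<open>negligible N\<close> \<open>\<epsilon> > 0\<close> half_gt_zero[OF \<open>e > 0\<close>] der]
      by blast
    show "\<exists>\<gamma>. gauge \<gamma> \<and> (\<forall>D. D tagged_division_of {a..b} \<and> \<gamma> fine D \<longrightarrow>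
        norm ((\<Sum>(x, K)\<in>D. measure lborel K *\<^sub>R (if x \<in> N then 0 else g' x)) - (g b - g a)) < e)"
    proof (intro exI[of _ \<gamma>] conjI allI impI)
      fix D assume "D tagged_division_of {a..b} \<and> \<gamma> fine D"
      then have "D tagged_division_of {a..b}" "\<gamma> fine D" by auto
      from \<gamma>[OF this] \<open>\<epsilon> * (b - a) + e / 2 < e\<close>
      show "norm ((\<Sum>(x, K)\<in>D. measure lborel K *\<^sub>R (if x \<in> N then 0 else g' x)) - (g b - g a)) < e"
        by linarith
    qed (fact \<open>gauge \<gamma>\<close>)
  qed
  then show ?thesis
    by (rule has_integral_spike[OF \<open>negligible N\<close>, rotated]) simp
qed

section \<open>Variation of constants\<close>

lemma variation_of_constants:
  fixes F :: "real^'n::finite^'n" and x f :: "real \<Rightarrow> real^'n"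
  assumes "0 \<le> t" "abs_continuous_on 0 t x" "negligible N"
    and der: "\<And>s. s \<in> {0..t} - N \<Longrightarrow> (x has_vector_derivative F *v x s + f s) (at s within {0..t})"
  shows "((\<lambda>s. mat_exp ((t - s) *\<^sub>R F) *v f s) has_integral x t - mat_exp (t *\<^sub>R F) *v x 0) {0..t}"
proof -
  define g where "g s = mat_exp (s *\<^sub>R - F) *v x s" for s
  have "((\<lambda>s. mat_exp (s *\<^sub>R - F) *v f s) has_integral g t - g 0) {0..t}"
  proof (rule fundamental_theorem_of_calculus_abs_continuous[OF assms(1) _ assms(3)])
    show "abs_continuous_on 0 t g"
      unfolding g_def by (rule abs_continuous_on_mat_exp_mult[OF assms(2)])
    fix s assume "s \<in> {0..t} - N"
    from has_vector_derivative_mat_exp_mult[OF der[OF this], of "- F"]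
    show "(g has_vector_derivative mat_exp (s *\<^sub>R - F) *v f s) (at s within {0..t})"
      unfolding g_def by (simp add: matrix_vector_mult_uminus)
  qed
  then have "((\<lambda>s. mat_exp (t *\<^sub>R F) *v (mat_exp (s *\<^sub>R - F) *v f s)) has_integral
      mat_exp (t *\<^sub>R F) *v (g t - g 0)) {0..t}"
    by (rule has_integral_linear[OF _ matrix_vector_mul_bounded_linear, unfolded o_def])
  moreover have "mat_exp (t *\<^sub>R F) *v (mat_exp (s *\<^sub>R - F) *v y) = mat_exp ((t - s) *\<^sub>R F) *v y" for s y
    using mat_exp_add_scaleR[of t F "- s"] by (simp add: matrix_vector_mul_assoc)
  ultimately show ?thesis
    by (simp add: g_def matrix_vector_mult_diff_distrib mat_exp_zero)
qed

lemma variation_of_constants_split: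
  fixes F :: "real^'n::finite^'n" and x f g :: "real \<Rightarrow> real^'n"
  assumes "0 \<le> t" "abs_continuous_on 0 t x" "negligible N" "continuous_on {0..t} g"
    and der: "\<And>s. s \<in> {0..t} - N \<Longrightarrow> (x has_vector_derivative F *v x s + (f s + g s)) (at s within {0..t})"
  shows "x t = (mat_exp (t *\<^sub>R F) *v x 0 + integral {0..t} (\<lambda>s. mat_exp ((t - s) *\<^sub>R F) *v f s))
      + integral {0..t} (\<lambda>s. mat_exp ((t - s) *\<^sub>R F) *v g s)"
proof -
  have "(\<lambda>s. mat_exp ((t - s) *\<^sub>R F) *v g s) integrable_on {0..t}"
    by (intro integrable_continuous_real continuous_on_mat_exp_mult continuous_intros assms(4))
  from has_integral_diff[OF variation_of_constants[OF assms(1-3) der] integrable_integral[OF this]]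
  have "integral {0..t} (\<lambda>s. mat_exp ((t - s) *\<^sub>R F) *v f s)
      = x t - mat_exp (t *\<^sub>R F) *v x 0 - integral {0..t} (\<lambda>s. mat_exp ((t - s) *\<^sub>R F) *v g s)"
    by (intro integral_unique) (simp add: matrix_vector_right_distrib)
  then show ?thesis by (simp add: algebra_simps)
qed

lemma variation_of_constants_output_injection:
  fixes A :: "real^'n::finite^'n" and B :: "real^'m::finite^'n" and C :: "real^'n^'p::finite"
    and E :: "real^'p^'n" and w :: "real \<Rightarrow> real^'m" and x :: "real \<Rightarrow> real^'n" and z :: "real \<Rightarrow> real^'p"
  assumes "0 \<le> t" "abs_continuous_on 0 t x" "abs_continuous_on 0 t z"
    and "AE s in lebesgue. s > 0 \<longrightarrow> (x has_vector_derivative (A *v x s + B *v w s + E *v z s)) (at s)"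
  shows "x t = (mat_exp (t *\<^sub>R (A + E ** C)) *v x 0
      + integral {0..t} (\<lambda>s. mat_exp ((t - s) *\<^sub>R (A + E ** C)) *v (B *v w s)))
      + integral {0..t} (\<lambda>s. mat_exp ((t - s) *\<^sub>R (A + E ** C)) *v (E *v (z s - C *v x s)))"
proof -
  obtain N where "negligible N" and N: "\<And>s. s \<notin> N \<Longrightarrow> s > 0 \<Longrightarrow>
      (x has_vector_derivative (A *v x s + B *v w s + E *v z s)) (at s)"
    using assms(4) unfolding eventually_ae_filter_negligible by blast
  show ?thesis
  proof (rule variation_of_constants_split[OF assms(1,2)])
    show "negligible (N \<union> {0})" using \<open>negligible N\<close> by simp
    show "continuous_on {0..t} (\<lambda>s. E *v (z s - C *v x s))"
      by (intro bounded_linear.continuous_on[OF matrix_vector_mul_bounded_linear] continuous_on_diff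
          abs_continuous_on_imp_continuous_on[OF assms(3)]
          bounded_linear.continuous_on[OF matrix_vector_mul_bounded_linear abs_continuous_on_imp_continuous_on[OF assms(2)]])
    fix s assume "s \<in> {0..t} - (N \<union> {0})"
    then have "(x has_vector_derivative A *v x s + B *v w s + E *v z s) (at s)"
      using N[of s] by auto
    moreover have "A *v x s + B *v w s + E *v z s = (A + E ** C) *v x s + (B *v w s + E *v (z s - C *v x s))"
      by (simp add: matrix_vector_mult_add_rdistrib matrix_vector_mult_diff_distrib matrix_vector_mul_assoc)
    ultimately show "(x has_vector_derivative (A + E ** C) *v x s + (B *v w s + E *v (z s - C *v x s)))
        (at s within {0..t})"
      by (simp add: has_vector_derivative_at_within)
  qed
qed

section \<open>Support functions and sublinear functions\<close>

lemma support_fun_ge: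
  assumes "compact S" "v \<in> S"
  shows "inner u v \<le> support_fun S u"
  unfolding support_fun_def
  by (intro cSup_upper imageI assms bounded_imp_bdd_above compact_imp_bounded
      compact_continuous_image continuous_intros)

lemma support_fun_attained:
  assumes "compact S" "S \<noteq> {}"
  obtains v where "v \<in> S" "support_fun S u = inner u v"
proof -
  have "continuous_on S (inner u)" by (intro continuous_intros)
  then obtain v where v: "v \<in> S" "\<And>y. y \<in> S \<Longrightarrow> inner u y \<le> inner u v"
    using continuous_attains_sup[OF assms] by blast
  then have "support_fun S u = inner u v"
    unfolding support_fun_def by (intro cSup_eq_maximum) auto
  with v(1) show ?thesis using that by blast
qed

lemma support_fun_add_le:
  assumes "compact S" "S \<noteq> {}"
  shows "support_fun S (u + w) \<le> support_fun S u + support_fun S w"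
proof -
  obtain v where "v \<in> S" "support_fun S (u + w) = inner (u + w) v"
    using support_fun_attained[OF assms] by metis
  then show ?thesis
    using support_fun_ge[OF assms(1), of v u] support_fun_ge[OF assms(1), of v w]
    by (simp add: inner_add_left)
qed

lemma support_fun_scaleR:
  assumes "compact S" "S \<noteq> {}" "0 \<le> c"
  shows "support_fun S (c *\<^sub>R u) = c * support_fun S u"
proof (rule antisym)
  obtain v where "v \<in> S" "support_fun S (c *\<^sub>R u) = inner (c *\<^sub>R u) v"
    using support_fun_attained[OF assms(1,2)] by metis
  then show "support_fun S (c *\<^sub>R u) \<le> c * support_fun S u"
    using support_fun_ge[OF assms(1), of v u] assms(3) by (simp add: mult_left_mono)
  obtain v where "v \<in> S" "support_fun S u = inner u v"
    using support_fun_attained[OF assms(1,2)] by metis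
  then show "c * support_fun S u \<le> support_fun S (c *\<^sub>R u)"
    using support_fun_ge[OF assms(1), of v "c *\<^sub>R u"] by simp
qed

lemma lipschitz_on_support_fun:
  assumes "compact S" "S \<noteq> {}" and R: "\<And>v. v \<in> S \<Longrightarrow> norm v \<le> R"
  shows "R-lipschitz_on T (support_fun S)"
proof (rule lipschitz_onI)
  have diff_le: "support_fun S u - support_fun S w \<le> R * dist u w" for u w
  proof -
    obtain v where v: "v \<in> S" "support_fun S u = inner u v"
      using support_fun_attained[OF assms(1,2)] by metis
    have "support_fun S u - support_fun S w \<le> inner (u - w) v"
      using v support_fun_ge[OF assms(1) v(1), of w] by (simp add: inner_diff_left)
    also have "\<dots> \<le> norm (u - w) * R"
      using R[OF v(1)] by (intro order_trans[OF norm_cauchy_schwarz] mult_left_mono) auto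
    finally show ?thesis by (simp add: dist_norm mult.commute)
  qed
  show "dist (support_fun S u) (support_fun S w) \<le> R * dist u w" for u w
    using diff_le[of u w] diff_le[of w u] by (simp add: dist_real_def dist_commute[of w u] abs_le_iff)
  obtain v where "v \<in> S" using assms(2) by blast
  then show "0 \<le> R" using R[of v] norm_ge_zero[of v] by linarith
qed

lemma continuous_on_support_fun:
  assumes "compact S" "S \<noteq> {}"
  shows "continuous_on T (support_fun S)"
proof -
  obtain R where "\<And>v. v \<in> S \<Longrightarrow> norm v \<le> R"
    using compact_imp_bounded[OF assms(1)] by (auto simp: bounded_iff)
  then show ?thesis
    by (intro lipschitz_on_continuous_on lipschitz_on_support_fun assms)
qed

lemma cone_inner_le_zero:
  assumes cone: "\<And>c z. 0 \<le> c \<Longrightarrow> z \<in> S \<Longrightarrow> c *\<^sub>R z \<in> S"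
    and le: "\<forall>z\<in>S. inner a z \<le> b" and "z \<in> S"
  shows "inner a z \<le> 0"
proof (rule ccontr)
  assume "\<not> inner a z \<le> 0"
  define c where "c = (\<bar>b\<bar> + 1) / inner a z"
  have "0 \<le> c" "c * inner a z = \<bar>b\<bar> + 1"
    using \<open>\<not> inner a z \<le> 0\<close> by (simp_all add: c_def)
  moreover have "inner a (c *\<^sub>R z) \<le> b"
    using le cone[OF \<open>0 \<le> c\<close> \<open>z \<in> S\<close>] by blast
  ultimately show False by simp
qed

lemma sublinear_imp_convex_on:
  assumes sub: "\<And>u v. H (u + v) \<le> H u + H v" and hom: "\<And>c u. 0 \<le> c \<Longrightarrow> H (c *\<^sub>R u) = c * H u"
  shows "convex_on UNIV H"
proof (rule convex_onI)
  fix t :: real and u v assume "0 < t" "t < 1"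
  then show "H ((1 - t) *\<^sub>R u + t *\<^sub>R v) \<le> (1 - t) * H u + t * H v"
    using sub[of "(1 - t) *\<^sub>R u" "t *\<^sub>R v"] hom[of "1 - t" u] hom[of t v] by simp
qed simp

lemma sublinear_epigraph_separation:
  fixes H :: "'a::euclidean_space \<Rightarrow> real"
  assumes sub: "\<And>u v. H (u + v) \<le> H u + H v" and hom: "\<And>c u. 0 \<le> c \<Longrightarrow> H (c *\<^sub>R u) = c * H u"
  obtains q p where "q < 0" "\<And>u r. H u \<le> r \<Longrightarrow> inner p u + q * r \<le> 0"
    "\<And>r. r < H u0 \<Longrightarrow> 0 \<le> inner p u0 + q * r"
proof -
  have H0: "H 0 = 0" using hom[of 0 0] by simp
  have "convex (epigraph UNIV H)"
    by (rule convex_epigraphI[OF sublinear_imp_convex_on[OF sub hom]])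
  moreover have "convex ({u0} \<times> {..<H u0})" by (intro convex_Times) auto
  moreover have "(0, 0) \<in> epigraph UNIV H" "(u0, H u0 - 1) \<in> {u0} \<times> {..<H u0}"
    by (auto simp: mem_epigraph H0)
  moreover have "epigraph UNIV H \<inter> ({u0} \<times> {..<H u0}) = {}"
    by (auto simp: mem_epigraph)
  ultimately obtain a b where "a \<noteq> 0" and epi: "\<forall>z\<in>epigraph UNIV H. inner a z \<le> b"
      and below: "\<forall>z\<in>{u0} \<times> {..<H u0}. b \<le> inner a z"
    using separating_hyperplane_sets[of "epigraph UNIV H" "{u0} \<times> {..<H u0}"] by blast
  obtain p q where a: "a = (p, q)" by (cases a)
  have "inner a (0, 0) \<le> b" using epi \<open>(0, 0) \<in> epigraph UNIV H\<close> by blast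
  then have "0 \<le> b" by (simp add: a)
  have epi_le: "inner p u + q * r \<le> 0" if "H u \<le> r" for u r
    using cone_inner_le_zero[OF _ epi, of "(u, r)"] hom that
    by (force simp: a mem_epigraph mult_left_mono)
  have "q \<noteq> 0"
  proof
    assume "q = 0"
    then have "inner p p \<le> 0" using epi_le[of p "H p"] by simp
    then have "p = 0" by (metis inner_eq_zero_iff inner_ge_zero order_antisym)
    then show False using \<open>a \<noteq> 0\<close> \<open>q = 0\<close> by (simp add: a zero_prod_def)
  qed
  with epi_le[of 0 1] H0 have "q < 0" by simp
  have below': "0 \<le> inner p u0 + q * r" if "r < H u0" for r
  proof -
    have "b \<le> inner a (u0, r)" using below that by blast
    then show ?thesis using \<open>0 \<le> b\<close> by (simp add: a)
  qed
  show ?thesis by (rule that[OF \<open>q < 0\<close> epi_le below'])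
qed

lemma sublinear_supporting_linear:
  fixes H :: "'a::euclidean_space \<Rightarrow> real"
  assumes sub: "\<And>u v. H (u + v) \<le> H u + H v" and hom: "\<And>c u. 0 \<le> c \<Longrightarrow> H (c *\<^sub>R u) = c * H u"
  obtains p where "\<And>u. inner p u \<le> H u" "inner p u0 = H u0"
proof (rule sublinear_epigraph_separation[OF sub hom, of u0])
  fix q p assume "q < 0" and epi_le: "\<And>u r. H u \<le> r \<Longrightarrow> inner p u + q * r \<le> 0"
    and below: "\<And>r. r < H u0 \<Longrightarrow> 0 \<le> inner p u0 + q * r"
  have "H u0 \<le> inner p u0 / - q"
  proof (rule dense_le)
    fix r assume "r < H u0"
    then show "r \<le> inner p u0 / - q"
      using below[OF \<open>r < H u0\<close>] \<open>q < 0\<close> by (subst pos_le_divide_eq) (simp_all add: algebra_simps)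
  qed
  moreover have "inner p u / - q \<le> H u" for u
    using epi_le[of u "H u"] \<open>q < 0\<close> by (subst pos_divide_le_eq) (simp_all add: algebra_simps)
  ultimately show ?thesis
    using that[of "(1 / - q) *\<^sub>R p"] by (simp add: antisym)
qed

definition support_body :: "('a::real_inner \<Rightarrow> real) \<Rightarrow> 'a set" where
  "support_body H = {y. \<forall>u. inner u y \<le> H u}"

lemma convex_support_body: "convex (support_body H)"
proof -
  have "support_body H = (\<Inter>u. {y. inner u y \<le> H u})" by (auto simp: support_body_def)
  then show ?thesis by (simp add: convex_INT convex_halfspace_le)
qed

lemma compact_support_body: "compact (support_body (H :: 'a::euclidean_space \<Rightarrow> real))"
proof -
  have "support_body H = (\<Inter>u. {y. inner u y \<le> H u})" by (auto simp: support_body_def)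
  then have "closed (support_body H)" by (simp add: closed_INT closed_halfspace_le)
  moreover have "norm y \<le> (\<Sum>i\<in>Basis. \<bar>H i\<bar> + \<bar>H (- i)\<bar>)" if "y \<in> support_body H" for y
  proof (rule order_trans[OF norm_le_l1 sum_mono])
    fix i :: 'a
    have all: "inner v y \<le> H v" for v using that by (simp add: support_body_def)
    from all[of i] all[of "- i"] show "\<bar>inner y i\<bar> \<le> \<bar>H i\<bar> + \<bar>H (- i)\<bar>" by (simp add: inner_commute)
  qed
  then have "bounded (support_body H)" by (auto simp: bounded_iff)
  ultimately show ?thesis by (simp add: compact_eq_bounded_closed)
qed

lemma support_fun_support_body:
  fixes H :: "'a::euclidean_space \<Rightarrow> real"
  assumes sub: "\<And>u v. H (u + v) \<le> H u + H v" and hom: "\<And>c u. 0 \<le> c \<Longrightarrow> H (c *\<^sub>R u) = c * H u"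
  shows "support_fun (support_body H) u = H u"
proof -
  obtain p where p: "\<And>v. inner p v \<le> H v" "inner p u = H u"
    using sublinear_supporting_linear[OF sub hom] by metis
  then have "p \<in> support_body H" by (simp add: support_body_def inner_commute)
  show ?thesis
    unfolding support_fun_def
  proof (rule cSup_eq_maximum)
    show "H u \<in> inner u ` support_body H"
      by (rule image_eqI[of _ _ p]) (use p(2) \<open>p \<in> support_body H\<close> in \<open>simp_all add: inner_commute\<close>)
  qed (auto simp: support_body_def)
qed

section \<open>The reachable set\<close>

lemma has_integral_reflect_shift:
  fixes \<phi> :: "real \<Rightarrow> 'a::real_normed_vector"
  assumes "(\<phi> has_integral I) {0..t}"
  shows "((\<lambda>s. \<phi> (t - s)) has_integral I) {0..t}"
proof -
  have "((\<lambda>s. \<phi> (- s)) has_integral I) {- t..- 0}"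
    using has_integral_reflect_real[of \<phi> I 0 t] assms by blast
  from has_integral_shift_real_ivl[OF this, of "- t"] show ?thesis by simp
qed

lemma inner_integral_le_integral_support_fun:
  fixes K :: "real \<Rightarrow> real^'p::finite^'n::finite" and v :: "real \<Rightarrow> real^'p"
  assumes "compact \<Theta>" "\<And>s. s \<in> S \<Longrightarrow> v s \<in> \<Theta>"
    and "(\<lambda>s. K s *v v s) integrable_on S" "(\<lambda>s. support_fun \<Theta> (transpose (K s) *v u)) integrable_on S"
  shows "inner u (integral S (\<lambda>s. K s *v v s)) \<le> integral S (\<lambda>s. support_fun \<Theta> (transpose (K s) *v u))"
proof -
  have "inner u (integral S (\<lambda>s. K s *v v s)) = integral S (\<lambda>s. inner u (K s *v v s))"
    using integral_linear[OF assms(3) bounded_linear_inner_right[of u]] by (simp add: o_def)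
  also have "\<dots> \<le> integral S (\<lambda>s. support_fun \<Theta> (transpose (K s) *v u))"
  proof (rule integral_le)
    show "(\<lambda>s. inner u (K s *v v s)) integrable_on S"
      using integrable_linear[OF assms(3) bounded_linear_inner_right[of u]] by (simp add: o_def)
    fix s assume "s \<in> S"
    have "inner u (K s *v v s) = inner (transpose (K s) *v u) (v s)"
      by (simp add: dot_lmul_matrix)
    also have "\<dots> \<le> support_fun \<Theta> (transpose (K s) *v u)"
      using support_fun_ge[OF assms(1) assms(2)[OF \<open>s \<in> S\<close>]] .
    finally show "inner u (K s *v v s) \<le> support_fun \<Theta> (transpose (K s) *v u)" .
  qed (fact assms(4))
  finally show ?thesis .
qed

lemma continuous_on_support_fun_mat_exp:
  fixes E :: "real^'p::finite^'n::finite" and M :: "real^'n^'n"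
  assumes "compact \<Theta>" "\<Theta> \<noteq> {}" "continuous_on S f"
  shows "continuous_on S (\<lambda>s. support_fun \<Theta> (transpose E *v (mat_exp (f s *\<^sub>R M) *v u)))"
  by (rule continuous_on_compose2[OF continuous_on_support_fun[OF assms(1,2)] _ subset_UNIV])
     (intro bounded_linear.continuous_on[OF matrix_vector_mul_bounded_linear]
        continuous_on_mat_exp_mult assms(3) continuous_on_const)

lemma integral_support_fun_mat_exp_sublinear:
  fixes E :: "real^'p::finite^'n::finite" and M :: "real^'n^'n" and a b :: real
  assumes "compact \<Theta>" "\<Theta> \<noteq> {}"
  defines "H u \<equiv> integral {a..b} (\<lambda>s. support_fun \<Theta> (transpose E *v (mat_exp (s *\<^sub>R M) *v u)))"
  shows "H (u + w) \<le> H u + H w" and "0 \<le> c \<Longrightarrow> H (c *\<^sub>R u) = c * H u"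
proof -
  have int: "(\<lambda>s. support_fun \<Theta> (transpose E *v (mat_exp (s *\<^sub>R M) *v u))) integrable_on {a..b}" for u
    by (intro integrable_continuous_real continuous_on_support_fun_mat_exp assms continuous_on_id)
  show "H (u + w) \<le> H u + H w"
    unfolding H_def integral_add[OF int int, symmetric]
    by (intro integral_le int integrable_add)
       (simp add: matrix_vector_right_distrib support_fun_add_le[OF assms(1,2)])
  show "H (c *\<^sub>R u) = c * H u" if "0 \<le> c"
    using that by (simp add: H_def matrix_vector_mult_scaleR support_fun_scaleR[OF assms(1,2)])
qed

lemma inner_integral_mat_exp_le:
  fixes F :: "real^'n::finite^'n" and E :: "real^'p::finite^'n" and v :: "real \<Rightarrow> real^'p"
  assumes "compact \<Theta>" "\<Theta> \<noteq> {}" "continuous_on {0..t} v" "\<And>s. s \<in> {0..t} \<Longrightarrow> v s \<in> \<Theta>"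
  shows "inner u (integral {0..t} (\<lambda>s. mat_exp ((t - s) *\<^sub>R F) *v (E *v v s)))
    \<le> integral {0..t} (\<lambda>s. support_fun \<Theta> (transpose E *v (mat_exp (s *\<^sub>R transpose F) *v u)))"
proof -
  define \<phi> where "\<phi> s = support_fun \<Theta> (transpose E *v (mat_exp (s *\<^sub>R transpose F) *v u))" for s
  have "continuous_on {0..t} \<phi>"
    unfolding \<phi>_def by (intro continuous_on_support_fun_mat_exp assms(1,2) continuous_on_id)
  then have \<phi>: "(\<phi> has_integral integral {0..t} \<phi>) {0..t}"
    by (intro integrable_integral integrable_continuous_real)
  have transpose: "transpose (mat_exp ((t - s) *\<^sub>R F) ** E) *v u = transpose E *v (mat_exp ((t - s) *\<^sub>R transpose F) *v u)"
    for s by (simp add: matrix_transpose_mul transpose_mat_exp transpose_scalar matrix_vector_mul_assoc)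
  have "inner u (integral {0..t} (\<lambda>s. (mat_exp ((t - s) *\<^sub>R F) ** E) *v v s))
      \<le> integral {0..t} (\<lambda>s. support_fun \<Theta> (transpose (mat_exp ((t - s) *\<^sub>R F) ** E) *v u))"
  proof (rule inner_integral_le_integral_support_fun[OF assms(1,4)])
    show "(\<lambda>s. (mat_exp ((t - s) *\<^sub>R F) ** E) *v v s) integrable_on {0..t}"
      unfolding matrix_vector_mul_assoc[symmetric]
      by (intro integrable_continuous_real continuous_on_mat_exp_mult continuous_intros
          bounded_linear.continuous_on[OF matrix_vector_mul_bounded_linear assms(3)])
    show "(\<lambda>s. support_fun \<Theta> (transpose (mat_exp ((t - s) *\<^sub>R F) ** E) *v u)) integrable_on {0..t}"
      unfolding transpose using has_integral_reflect_shift[OF \<phi>] unfolding \<phi>_def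
      by (rule has_integral_integrable)
  qed
  also have "\<dots> = integral {0..t} \<phi>"
    unfolding transpose using has_integral_reflect_shift[OF \<phi>] unfolding \<phi>_def
    by (rule integral_unique)
  finally show ?thesis
    by (simp only: \<phi>_def[abs_def] matrix_vector_mul_assoc)
qed

lemma mat_exp_convolution_in_convex_body:
  fixes F :: "real^'n::finite^'n" and E :: "real^'p::finite^'n" and v :: "real \<Rightarrow> real^'p"
  assumes "compact \<Theta>" "0 \<le> t" "continuous_on {0..t} v" "\<And>s. s \<in> {0..t} \<Longrightarrow> v s \<in> \<Theta>"
  obtains \<Xi> where "convex \<Xi>" "compact \<Xi>"
    "\<And>u. support_fun \<Xi> u = integral {0..t} (\<lambda>s. support_fun \<Theta> (transpose E *v (mat_exp (s *\<^sub>R transpose F) *v u)))"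
    "integral {0..t} (\<lambda>s. mat_exp ((t - s) *\<^sub>R F) *v (E *v v s)) \<in> \<Xi>"
proof -
  have "\<Theta> \<noteq> {}" using assms(4)[of 0] assms(2) by auto
  define H where "H u = integral {0..t} (\<lambda>s. support_fun \<Theta> (transpose E *v (mat_exp (s *\<^sub>R transpose F) *v u)))" for u
  have sub: "H (u + w) \<le> H u + H w" for u w
    unfolding H_def by (rule integral_support_fun_mat_exp_sublinear(1)[OF assms(1) \<open>\<Theta> \<noteq> {}\<close>])
  have hom: "H (c *\<^sub>R u) = c * H u" if "0 \<le> c" for c u
    unfolding H_def by (rule integral_support_fun_mat_exp_sublinear(2)[OF assms(1) \<open>\<Theta> \<noteq> {}\<close> that])
  have mem: "inner u (integral {0..t} (\<lambda>s. mat_exp ((t - s) *\<^sub>R F) *v (E *v v s))) \<le> H u" for u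
    unfolding H_def by (rule inner_integral_mat_exp_le[OF assms(1) \<open>\<Theta> \<noteq> {}\<close> assms(3,4)])
  show ?thesis
  proof (rule that[of "support_body H"])
    show "support_fun (support_body H) u
        = integral {0..t} (\<lambda>s. support_fun \<Theta> (transpose E *v (mat_exp (s *\<^sub>R transpose F) *v u)))" for u
      unfolding H_def[symmetric] by (rule support_fun_support_body[OF sub hom])
    show "integral {0..t} (\<lambda>s. mat_exp ((t - s) *\<^sub>R F) *v (E *v v s)) \<in> support_body H"
      using mem by (simp add: support_body_def)
  qed (simp_all add: convex_support_body compact_support_body)
qed

theorem lemma1:
  fixes A :: "real^'n^'n" and B :: "real^'m^'n" and C :: "real^'n^'p" and E :: "real^'p^'n"
    and \<Theta> :: "(real^'p) set"
    and w :: "real \<Rightarrow> real^'m" and x :: "real \<Rightarrow> real^'n" and z :: "real \<Rightarrow> real^'p"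
    and t :: real
  assumes "convex \<Theta>" and "compact \<Theta>"
    and "\<forall>T\<ge>0. w absolutely_integrable_on {0..T}"
    and "loc_abs_continuous x" and "loc_abs_continuous z"
    and "AE s in lebesgue. s > 0 \<longrightarrow>
           (x has_vector_derivative (A *v x s + B *v w s + E *v z s)) (at s) \<and>
           (z has_vector_derivative
              closest_point (normal_cone \<Theta> (z s - C *v x s))
                (C *v (A *v x s + B *v w s + E *v z s))) (at s)"
    and "\<forall>s\<ge>0. z s \<in> (\<lambda>v. C *v x s + v) ` \<Theta>"
    and "t \<ge> 0"
  shows "\<exists>\<Xi> :: (real^'n) set. convex \<Xi> \<and> compact \<Xi> \<and>
           (\<forall>u. support_fun \<Xi> u =
              integral {0..t} (\<lambda>s. support_fun \<Theta>
                 (transpose E *v (mat_exp (s *\<^sub>R transpose (A + E ** C)) *v u)))) \<and>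
           x t \<in> (\<lambda>v. (mat_exp (t *\<^sub>R (A + E ** C)) *v x 0
                     + integral {0..t} (\<lambda>s. mat_exp ((t - s) *\<^sub>R (A + E ** C)) *v (B *v w s))) + v) ` \<Xi>"
proof -
  have ac: "abs_continuous_on 0 t x" "abs_continuous_on 0 t z"
    using assms(4,5,8) by (simp_all add: loc_abs_continuous_def)
  have "AE s in lebesgue. s > 0 \<longrightarrow> (x has_vector_derivative (A *v x s + B *v w s + E *v z s)) (at s)"
    using assms(6) by (rule eventually_mono) blast
  note x_t = variation_of_constants_output_injection[OF assms(8) ac this]
  have "continuous_on {0..t} (\<lambda>s. z s - C *v x s)"
    by (intro continuous_on_diff abs_continuous_on_imp_continuous_on[OF ac(2)]
        bounded_linear.continuous_on[OF matrix_vector_mul_bounded_linear abs_continuous_on_imp_continuous_on[OF ac(1)]])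
  moreover have "z s - C *v x s \<in> \<Theta>" if "s \<in> {0..t}" for s
    using assms(7) that by force
  ultimately show ?thesis
  proof (rule mat_exp_convolution_in_convex_body[OF assms(2,8), where F = "A + E ** C" and E = E])
    fix \<Xi> assume \<Xi>: "convex \<Xi>" "compact \<Xi>"
      "\<And>u. support_fun \<Xi> u = integral {0..t}
         (\<lambda>s. support_fun \<Theta> (transpose E *v (mat_exp (s *\<^sub>R transpose (A + E ** C)) *v u)))"
      "integral {0..t} (\<lambda>s. mat_exp ((t - s) *\<^sub>R (A + E ** C)) *v (E *v (z s - C *v x s))) \<in> \<Xi>"
    have "x t \<in> (\<lambda>v. (mat_exp (t *\<^sub>R (A + E ** C)) *v x 0
        + integral {0..t} (\<lambda>s. mat_exp ((t - s) *\<^sub>R (A + E ** C)) *v (B *v w s))) + v) ` \<Xi>"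
      using x_t \<Xi>(4) by (rule image_eqI)
    with \<Xi>(1-3) show ?thesis by blast
  qed
qed

end
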